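(* For all integers $r \geq 3$ and $k \geq \max\{r-1,4\}$, we have $N(k,r) \geq (2r-4)k$.
   Context: A $k$-power is a word of the form $u^k$ (concatenation of $k$ copies of $u$) with $u$ nonempty. An $r$-antipower is a word $u_1 \cdots u_r$ with $|u_1| = \cdots = |u_r|$ and $u_1,\dots,u_r$ pairwise distinct. $N(k,r)$ is the smallest integer $\ell$ such that every binary word (over $\{0,1\}$) of length $\ell$ contains either a $k$-power or an $r$-antipower as a factor (contiguous subword). *)

theory Defs
  imports Main
begin

definition is_factor :: "'a list \<Rightarrow> 'a list \<Rightarrow> bool" where
  "is_factor v w \<longleftrightarrow> (\<exists>p s. w = p @ v @ s)"

definition is_power :: "nat \<Rightarrow> 'a list \<Rightarrow> bool" where
  "is_power k w \<longleftrightarrow> (\<exists>u. u \<noteq> [] \<and> w = concat (replicate k u))"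

definition is_antipower :: "nat \<Rightarrow> 'a list \<Rightarrow> bool" where
  "is_antipower r w \<longleftrightarrow> (\<exists>us. length us = r \<and> w = concat us \<and> distinct us \<and>
      (\<forall>u\<in>set us. \<forall>v\<in>set us. length u = length v))"

definition N :: "nat \<Rightarrow> nat \<Rightarrow> nat" where
  "N k r = (LEAST l. \<forall>w :: bool list. length w = l \<longrightarrow>
      (\<exists>v. is_factor v w \<and> (is_power k v \<or> is_antipower r v)))"

end

(*
  Lower bound: let q = r - 2 and M = qk - 1, and let w be the word of length 2qk - 1 whose
  letter at position x is "q divides x", except that the letter at M is flipped. Among r = q + 2
  consecutive blocks of equal length at most one contains M, and two of the remaining q + 1 start
  at positions congruent mod q, so w has no r-antipower. A k-power of period m in w is a run of
  length km on which the letter at x equals the letter at x + m. If q divides m, the run contains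
  M and compares it with a position of the same residue, which is impossible. Otherwise the first
  multiple x0 of q in the run and a position x1 of the run with q dividing x1 + m force M = x0 + m
  and M = x1; as q also divides M + 1, q divides 2, and for q = 2 every position of the run would
  be M or M - m.

  Since N k r is a least element, one also needs some length that is unavoidable. If a word has
  no r-antipower, then for every block length c two of its first r blocks coincide; by pigeonhole
  the same pair of block indices i < i + d occurs for two lengths c1 < c1 + e, and the two
  coincidences combine into a period d e on a run of length at least k d e.
*)

theory Submission
  imports Defs "HOL-Library.Sublist"
begin

section \<open>Powers and antipowers as conditions on positions\<close>

lemma is_factor_eq_sublist: "is_factor = sublist"
  by (intro ext) (simp add: is_factor_def sublist_def)

lemma is_factor_take_drop: "is_factor (take n (drop p w)) w"
  unfolding is_factor_def by (metis append_take_drop_id)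

lemma not_inj_on_imp_less_pair:
  fixes f :: "'a :: linorder \<Rightarrow> 'b"
  assumes "\<not> inj_on f A"
  obtains x y where "x \<in> A" "y \<in> A" "x < y" "f x = f y"
  using assms unfolding inj_on_def by (metis linorder_neqE)

lemma block_end_le: "(j::nat) < r \<Longrightarrow> j*m + m \<le> r*m"
  using mult_le_mono1[of "Suc j" r m] by simp

lemma concat_replicate_nth:
  "i < k * length u \<Longrightarrow> concat (replicate k u) ! i = u ! (i mod length u)"
proof (induction k arbitrary: i)
  case (Suc k)
  show ?case
  proof (cases "i < length u")
    case False
    then have "concat (replicate k u) ! (i - length u) = u ! (i mod length u)"
      using Suc by (simp add: le_mod_geq)
    then show ?thesis using False by (simp add: nth_append)
  qed (simp add: nth_append)
qed simp

lemma periodic_nth_mod: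
  fixes f :: "nat \<Rightarrow> 'a"
  assumes periodic: "\<And>z. p \<le> z \<Longrightarrow> z + m < p + L \<Longrightarrow> f z = f (z + m)"
    and "0 < m" and "i < L"
  shows "f (p + i) = f (p + i mod m)"
  using \<open>i < L\<close>
proof (induction i rule: less_induct)
  case (less i)
  show ?case
  proof (cases "i < m")
    case False
    then have "f (p + i) = f (p + (i - m))"
      using periodic[of "p + (i - m)"] less.prems by simp
    also have "\<dots> = f (p + i mod m)"
      using less.IH[of "i - m"] less.prems False \<open>0 < m\<close> by (simp add: le_mod_geq)
    finally show ?thesis .
  qed simp
qed

lemma take_concat_chunks:
  "concat (map (\<lambda>i. take m (drop (i*m) xs)) [0..<r]) = take (r*m) xs"
proof (induction r)
  case (Suc r)
  have "take (Suc r * m) xs = take (r*m) xs @ take m (drop (r*m) xs)"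
    by (metis add.commute mult_Suc take_add)
  then show ?case using Suc by simp
qed simp

lemma length_concat_equal_length:
  "\<forall>u\<in>set us. length u = m \<Longrightarrow> length (concat us) = length us * m"
  by (induction us) auto

lemma chunk_of_concat_equal_length:
  assumes "\<forall>u\<in>set us. length u = m" "i < length us"
  shows "take m (drop (i*m) (concat us)) = us ! i"
  using assms
proof (induction us arbitrary: i)
  case (Cons u us)
  then show ?case by (cases i) simp_all
qed simp

lemma factor_power_iff_periodic_run:
  assumes "0 < k"
  shows "(\<exists>v. is_factor v w \<and> is_power k v) \<longleftrightarrow>
    (\<exists>p m. 0 < m \<and> p + k*m \<le> length w \<and>
      (\<forall>z. p \<le> z \<longrightarrow> z + m < p + k*m \<longrightarrow> w!z = w!(z + m)))"
    (is "?factor \<longleftrightarrow> ?run")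
proof
  assume ?factor
  then obtain a v b u where w: "w = a @ v @ b" and "u \<noteq> []" and v: "v = concat (replicate k u)"
    unfolding is_factor_def is_power_def by blast
  define m where "m = length u"
  have "0 < m" using \<open>u \<noteq> []\<close> by (simp add: m_def)
  have len_v: "length v = k*m" by (simp add: v m_def length_concat sum_list_replicate)
  have "w!z = w!(z + m)" if "length a \<le> z" "z + m < length a + k*m" for z
  proof -
    have i: "z - length a + m < k*m" using that by linarith
    then have "z - length a < k*m" by linarith
    have "w!z = u!((z - length a) mod m)"
      using that \<open>z - length a < k*m\<close> len_v concat_replicate_nth[of "z - length a" k u]
      by (simp add: w v m_def nth_append)
    also have "\<dots> = u!((z - length a + m) mod m)" by simp
    also have "\<dots> = w!(z + m)"
      using that i len_v concat_replicate_nth[of "z - length a + m" k u]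
      by (simp add: w v m_def nth_append Nat.add_diff_assoc2)
    finally show ?thesis .
  qed
  then show ?run using \<open>0 < m\<close> len_v w by (intro exI[of _ "length a"] exI[of _ m]) auto
next
  assume ?run
  then obtain p m where "0 < m" and len: "p + k*m \<le> length w"
    and periodic: "\<forall>z. p \<le> z \<longrightarrow> z + m < p + k*m \<longrightarrow> w!z = w!(z + m)"
    by blast
  define u where "u = take m (drop p w)"
  define v where "v = take (k*m) (drop p w)"
  have "m \<le> k*m" using \<open>0 < k\<close> by simp
  then have "p + m \<le> length w" using len by linarith
  then have len_u: "length u = m" using len by (simp add: u_def)
  have "v = concat (replicate k u)"
  proof (rule nth_equalityI)
    show "length v = length (concat (replicate k u))"
      using len by (simp add: v_def len_u length_concat sum_list_replicate)
  next
    fix i assume "i < length v"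
    then have "i < k*m" using len by (simp add: v_def)
    then have "v!i = w!(p + i mod m)"
      using periodic_nth_mod[of p m "k*m" "(!) w" i] periodic \<open>0 < m\<close> len by (simp add: v_def)
    also have "\<dots> = concat (replicate k u) ! i"
      using \<open>i < k*m\<close> \<open>0 < m\<close> len_u concat_replicate_nth[of i k u] by (simp add: u_def)
    finally show "v!i = concat (replicate k u) ! i" .
  qed
  moreover have "u \<noteq> []" using len_u \<open>0 < m\<close> by auto
  ultimately show ?factor using is_factor_take_drop unfolding v_def is_power_def by blast
qed

lemma factor_antipower_iff_distinct_blocks:
  "(\<exists>v. is_factor v w \<and> is_antipower r v) \<longleftrightarrow>
    (\<exists>p m. p + r*m \<le> length w \<and> distinct (map (\<lambda>i. take m (drop (p + i*m) w)) [0..<r]))"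
    (is "?factor \<longleftrightarrow> ?blocks")
proof
  assume ?factor
  then obtain a v b us where w: "w = a @ v @ b" and "length us = r" "v = concat us" "distinct us"
      and equal_len: "\<forall>u\<in>set us. \<forall>u'\<in>set us. length u = length u'"
    unfolding is_factor_def is_antipower_def by blast
  define m where "m = length (hd us)"
  have len_us: "\<forall>u\<in>set us. length u = m"
    using equal_len hd_in_set by (metis m_def empty_iff empty_set)
  then have len_v: "length v = r*m"
    using \<open>v = concat us\<close> \<open>length us = r\<close> length_concat_equal_length[OF len_us] by simp
  have "map (\<lambda>i. take m (drop (length a + i*m) w)) [0..<r] = us"
  proof (rule nth_equalityI)
    fix i assume "i < length (map (\<lambda>i. take m (drop (length a + i*m) w)) [0..<r])"
    then have "i < r" by simp
    then have "i*m + m \<le> length v" using len_v block_end_le[of i r m] by simp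
    then have "take m (drop (length a + i*m) w) = take m (drop (i*m) v)" by (simp add: w)
    also have "\<dots> = us ! i"
      using chunk_of_concat_equal_length[OF len_us] \<open>i < r\<close> \<open>v = concat us\<close> \<open>length us = r\<close> by simp
    finally show "map (\<lambda>i. take m (drop (length a + i*m) w)) [0..<r] ! i = us ! i"
      using \<open>i < r\<close> by simp
  qed (simp add: \<open>length us = r\<close>)
  then show ?blocks using \<open>distinct us\<close> len_v w by (intro exI[of _ "length a"] exI[of _ m]) auto
next
  assume ?blocks
  then obtain p m where len: "p + r*m \<le> length w"
    and "distinct (map (\<lambda>i. take m (drop (p + i*m) w)) [0..<r])" (is "distinct ?us")
    by blast
  have "concat ?us = concat (map (\<lambda>i. take m (drop (i*m) (drop p w))) [0..<r])"
    by (simp add: add.commute)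
  also have "\<dots> = take (r*m) (drop p w)" by (rule take_concat_chunks)
  finally have "concat ?us = take (r*m) (drop p w)" .
  moreover have "\<forall>u\<in>set ?us. length u = m"
  proof
    fix u assume "u \<in> set ?us"
    then obtain i where "i < r" "u = take m (drop (p + i*m) w)" by auto
    moreover have "p + i*m + m \<le> length w" using len block_end_le[OF \<open>i < r\<close>, of m] by linarith
    ultimately show "length u = m" by simp
  qed
  ultimately show ?factor
    unfolding is_antipower_def using \<open>distinct ?us\<close> is_factor_take_drop
    by (metis (no_types, lifting) length_map length_upt minus_nat.diff_0)
qed

lemma shift_between_coincident_blocks:
  fixes w :: "'a list"
  assumes coincide1: "\<And>t. t < c1 \<Longrightarrow> w!(i*c1 + t) = w!((i + d)*c1 + t)"
    and coincide2: "\<And>t. t < c2 \<Longrightarrow> w!(i*c2 + t) = w!((i + d)*c2 + t)"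
    and "c1 \<le> c2" "i*c2 \<le> y" "y < i*c1 + c1"
  shows "w!(y + d*c1) = w!(y + d*c2)"
proof -
  have "i*c1 \<le> i*c2" using \<open>c1 \<le> c2\<close> by simp
  then have "i*c1 \<le> y" "y - i*c1 < c1" "y - i*c2 < c2" using assms(3-5) by linarith+
  have "i*c1 + (y - i*c1) = y" "(i + d)*c1 + (y - i*c1) = y + d*c1"
    "i*c2 + (y - i*c2) = y" "(i + d)*c2 + (y - i*c2) = y + d*c2"
    using \<open>i*c1 \<le> y\<close> assms(4) by (simp_all add: add_mult_distrib)
  then show ?thesis
    using coincide1[OF \<open>y - i*c1 < c1\<close>] coincide2[OF \<open>y - i*c2 < c2\<close>] by simp
qed

section \<open>Existence of N\<close>

lemma pigeonhole_interval_pairs: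
  fixes f :: "nat \<Rightarrow> nat \<times> nat"
  assumes "\<And>c. a \<le> c \<Longrightarrow> c \<le> a + r^2 \<Longrightarrow> f c \<in> {..<r} \<times> {..<r}"
  obtains c1 c2 where "a \<le> c1" "c1 < c2" "c2 \<le> a + r^2" "f c1 = f c2"
proof -
  have "f ` {a..a + r^2} \<subseteq> {..<r} \<times> {..<r}" by (rule image_subsetI) (rule assms; simp)
  then have "card (f ` {a..a + r^2}) \<le> card ({..<r} \<times> {..<r})" by (intro card_mono) auto
  also have "\<dots> < card {a..a + r^2}" by (simp add: card_cartesian_product power2_eq_square)
  finally have "\<not> inj_on f {a..a + r^2}" by (rule pigeonhole)
  then show ?thesis using that by (elim not_inj_on_imp_less_pair) auto
qed

lemma repeated_blocks_if_no_antipower: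
  fixes w :: "'a list"
  assumes "\<not> (\<exists>v. is_factor v w \<and> is_antipower r v)" and "r*c \<le> length w"
  shows "\<exists>i d. 0 < d \<and> i + d < r \<and> (\<forall>t<c. w!(i*c + t) = w!((i + d)*c + t))"
proof -
  have "\<not> (p + r*m \<le> length w \<and> distinct (map (\<lambda>i. take m (drop (p + i*m) w)) [0..<r]))" for p m
    using assms(1) factor_antipower_iff_distinct_blocks[of w r] by blast
  from this[of 0 c] have "\<not> distinct (map (\<lambda>i. take c (drop (i*c) w)) [0..<r])"
    using assms(2) by simp
  then obtain i j where "i < j" "j < r" and same: "take c (drop (i*c) w) = take c (drop (j*c) w)"
    by (auto simp: distinct_map elim!: not_inj_on_imp_less_pair)
  have "j*c + c \<le> length w" using \<open>r*c \<le> length w\<close> block_end_le[OF \<open>j < r\<close>, of c] by linarith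
  moreover have "i*c \<le> j*c" using \<open>i < j\<close> by simp
  ultimately have "w!(i*c + t) = w!(j*c + t)" if "t < c" for t
  proof -
    have "i*c + t < length w" "j*c + t < length w"
      using that \<open>i*c \<le> j*c\<close> \<open>j*c + c \<le> length w\<close> by linarith+
    then show ?thesis using arg_cong[OF same, of "\<lambda>xs. xs ! t"] that by simp
  qed
  then show ?thesis using \<open>i < j\<close> \<open>j < r\<close> by (intro exI[of _ i] exI[of _ "j - i"]) simp
qed

lemma power_from_coincident_blocks:
  fixes w :: "'a list"
  assumes coincide1: "\<And>t. t < c1 \<Longrightarrow> w!(i*c1 + t) = w!((i + d)*c1 + t)"
    and coincide2: "\<And>t. t < c1 + e \<Longrightarrow> w!(i*(c1 + e) + t) = w!((i + d)*(c1 + e) + t)"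
    and "0 < k" "0 < d" "0 < e"
    and short_shift: "i*e + (k - 1)*(d*e) \<le> c1"
    and fits: "(i + d + 1)*(c1 + e) \<le> length w"
  shows "\<exists>v. is_factor v w \<and> is_power k v"
proof -
  define P where "P = d*e"
  define p where "p = i*(c1 + e) + d*c1"
  have kP: "k*P = (k - 1)*P + P" using \<open>0 < k\<close> by (cases k) auto
  have expand: "i*(c1 + e) = i*c1 + i*e" "d*(c1 + e) = d*c1 + P"
    "(i + d + 1)*(c1 + e) = i*(c1 + e) + d*(c1 + e) + (c1 + e)"
    by (simp_all add: P_def algebra_simps)
  have budget: "i*e + (k - 1)*P \<le> c1" using short_shift by (simp add: P_def)
  have "p + k*P \<le> length w"
    using budget fits expand kP p_def by linarith
  moreover have "w!z = w!(z + P)" if "p \<le> z" "z + P < p + k*P" for z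
  proof -
    have "w!(z - d*c1 + d*c1) = w!(z - d*c1 + d*(c1 + e))"
      using that budget expand kP p_def
      by (intro shift_between_coincident_blocks[OF coincide1 coincide2]) linarith+
    moreover have "z - d*c1 + d*(c1 + e) = z + P" using that expand p_def by linarith
    ultimately show ?thesis using that p_def by simp
  qed
  moreover have "0 < P" using \<open>0 < d\<close> \<open>0 < e\<close> by (simp add: P_def)
  ultimately show ?thesis using factor_power_iff_periodic_run[OF \<open>0 < k\<close>, of w] by blast
qed

lemma long_word_has_power_or_antipower:
  fixes w :: "'a list"
  assumes "0 < k" and len_w: "length w = r * (k*r^3 + r^2)"
  shows "\<exists>v. is_factor v w \<and> (is_power k v \<or> is_antipower r v)"
proof (rule ccontr)
  assume none: "\<not> ?thesis"
  define c0 where "c0 = k*r^3"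
  define repeat where "repeat c i d \<longleftrightarrow>
    0 < d \<and> i + d < r \<and> (\<forall>t<c. w!(i*c + t) = w!((i + d)*c + t))" for c i d
  have "\<exists>i d. repeat c i d" if "c \<le> c0 + r^2" for c
    using repeated_blocks_if_no_antipower[of w r c] none that len_w
    unfolding repeat_def by (simp add: c0_def)
  then obtain I D where "\<And>c. c \<le> c0 + r^2 \<Longrightarrow> repeat c (I c) (D c)" by metis
  then have coincide: "\<And>c. c \<le> c0 + r^2 \<Longrightarrow> 0 < D c \<and> I c + D c < r \<and>
      (\<forall>t<c. w!(I c*c + t) = w!((I c + D c)*c + t))"
    unfolding repeat_def by blast
  have "(I c, D c) \<in> {..<r} \<times> {..<r}" if "c \<le> c0 + r^2" for c
    using coincide[OF that] by auto
  then obtain c1 c2 where "c0 \<le> c1" "c1 < c2" "c2 \<le> c0 + r^2" "(I c1, D c1) = (I c2, D c2)"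
    by (rule pigeonhole_interval_pairs[where f = "\<lambda>c. (I c, D c)"])
  define i where "i = I c1"
  define d where "d = D c1"
  have "0 < d" "i + d < r"
    and coincide1: "\<And>t. t < c1 \<Longrightarrow> w!(i*c1 + t) = w!((i + d)*c1 + t)"
    and coincide2: "\<And>t. t < c2 \<Longrightarrow> w!(i*c2 + t) = w!((i + d)*c2 + t)"
    using coincide[of c1] coincide[of c2] \<open>(I c1, D c1) = (I c2, D c2)\<close> \<open>c1 < c2\<close>
      \<open>c2 \<le> c0 + r^2\<close>
    by (auto simp: i_def d_def)
  define e where "e = c2 - c1"
  have "c2 = c1 + e" "0 < e" "e \<le> r^2"
    using \<open>c0 \<le> c1\<close> \<open>c1 < c2\<close> \<open>c2 \<le> c0 + r^2\<close> by (auto simp: e_def)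
  have "i + (k - 1)*d \<le> r + (k - 1)*r"
    using \<open>i + d < r\<close> by (intro add_mono mult_le_mono2) auto
  also have "\<dots> = k*r" using \<open>0 < k\<close> by (cases k) auto
  finally have "(i + (k - 1)*d)*e \<le> k*r*r^2"
    using \<open>e \<le> r^2\<close> by (intro mult_le_mono)
  then have short_shift: "i*e + (k - 1)*(d*e) \<le> c1"
    using \<open>c0 \<le> c1\<close> by (simp add: c0_def algebra_simps power3_eq_cube power2_eq_square)
  have "(i + d + 1)*c2 \<le> r*c2" using \<open>i + d < r\<close> by (intro mult_le_mono1) simp
  also have "\<dots> \<le> length w" using \<open>c2 \<le> c0 + r^2\<close> len_w by (simp add: c0_def)
  finally have fits: "(i + d + 1)*(c1 + e) \<le> length w" using \<open>c2 = c1 + e\<close> by simp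
  from power_from_coincident_blocks[OF coincide1 coincide2[unfolded \<open>c2 = c1 + e\<close>]
      \<open>0 < k\<close> \<open>0 < d\<close> \<open>0 < e\<close> short_shift fits]
  show False using none by blast
qed

definition avoids :: "nat \<Rightarrow> nat \<Rightarrow> 'a list \<Rightarrow> bool" where
  "avoids k r w \<longleftrightarrow> \<not> (\<exists>v. is_factor v w \<and> (is_power k v \<or> is_antipower r v))"

lemma avoids_take: "avoids k r w \<Longrightarrow> avoids k r (take n w)"
  unfolding avoids_def is_factor_eq_sublist using sublist_order.order_trans by blast

lemma length_less_N_if_avoids:
  assumes "0 < k" and "avoids k r (w :: bool list)"
  shows "length w < N k r"
proof -
  let ?unavoidable = "\<lambda>l. \<forall>w :: bool list. length w = l \<longrightarrow> \<not> avoids k r w"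
  have N_eq: "N k r = (LEAST l. ?unavoidable l)" by (simp add: N_def avoids_def)
  have "?unavoidable (r * (k*r^3 + r^2))"
    using long_word_has_power_or_antipower[OF \<open>0 < k\<close>] unfolding avoids_def by blast
  then have "?unavoidable (N k r)" unfolding N_eq by (rule LeastI)
  show ?thesis
  proof (rule ccontr)
    assume "\<not> length w < N k r"
    then have "length (take (N k r) w) = N k r" by simp
    then show False using \<open>?unavoidable (N k r)\<close> avoids_take[OF assms(2)] by blast
  qed
qed

section \<open>A word with one defect in a q-periodic pattern\<close>

definition defect_letter :: "nat \<Rightarrow> nat \<Rightarrow> nat \<Rightarrow> bool" where
  "defect_letter q M x \<longleftrightarrow> (q dvd x) \<noteq> (x = M)"

definition defect_word :: "nat \<Rightarrow> nat \<Rightarrow> bool list" where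
  "defect_word q k = map (defect_letter q (q*k - 1)) [0..<2*q*k - 1]"

lemma defect_letter_cong:
  "x \<noteq> M \<Longrightarrow> y \<noteq> M \<Longrightarrow> x mod q = y mod q \<Longrightarrow> defect_letter q M x = defect_letter q M y"
  by (simp add: defect_letter_def dvd_eq_mod_eq_0)

lemma defect_letter_blocks_repeat:
  assumes "0 < q"
  obtains j1 j2 where "j1 < j2" "j2 < q + 2"
    "\<And>t. t < m \<Longrightarrow> defect_letter q M (p + j1*m + t) = defect_letter q M (p + j2*m + t)"
proof -
  define J where "J = {..<q + 2} - {(M - p) div m}"
  have avoid: "p + j*m + t \<noteq> M" if "j \<in> J" "t < m" for j t
  proof
    assume "p + j*m + t = M"
    then have "(M - p) div m = j" using \<open>t < m\<close> by (intro div_nat_eqI) (auto simp: algebra_simps)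
    with \<open>j \<in> J\<close> show False by (simp add: J_def)
  qed
  have "card ((\<lambda>j. (p + j*m) mod q) ` J) \<le> card {..<q}"
    using \<open>0 < q\<close> by (intro card_mono) auto
  also have "\<dots> < card J" by (simp add: J_def card_Diff_singleton_if)
  finally have "\<not> inj_on (\<lambda>j. (p + j*m) mod q) J" by (rule pigeonhole)
  then obtain j1 j2 where "j1 \<in> J" "j2 \<in> J" "j1 < j2" "(p + j1*m) mod q = (p + j2*m) mod q"
    by (rule not_inj_on_imp_less_pair)
  moreover have "defect_letter q M (p + j1*m + t) = defect_letter q M (p + j2*m + t)"
    if "t < m" for t
    using avoid[OF \<open>j1 \<in> J\<close> that] avoid[OF \<open>j2 \<in> J\<close> that] \<open>(p + j1*m) mod q = (p + j2*m) mod q\<close>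
    by (intro defect_letter_cong) (metis mod_add_left_eq)+
  ultimately show ?thesis using that by (auto simp: J_def)
qed

lemma defect_letters_no_antipower:
  assumes "0 < q"
  shows "\<not> (\<exists>v. is_factor v (map (defect_letter q M) [0..<n]) \<and> is_antipower (q + 2) v)"
proof
  let ?w = "map (defect_letter q M) [0..<n]"
  assume "\<exists>v. is_factor v ?w \<and> is_antipower (q + 2) v"
  then obtain p m where "p + (q + 2)*m \<le> length ?w"
    and distinct_blocks: "distinct (map (\<lambda>i. take m (drop (p + i*m) ?w)) [0..<q + 2])"
      (is "distinct (map ?block _)")
    unfolding factor_antipower_iff_distinct_blocks by blast
  then have len: "p + (q + 2)*m \<le> n" by simp
  have inj: "inj_on ?block {0..<q + 2}" using distinct_blocks by (simp only: distinct_map set_upt)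
  obtain j1 j2 where "j1 < j2" "j2 < q + 2"
    and same: "\<And>t. t < m \<Longrightarrow> defect_letter q M (p + j1*m + t) = defect_letter q M (p + j2*m + t)"
    using defect_letter_blocks_repeat[OF \<open>0 < q\<close>] by blast
  have fits: "p + j*m + m \<le> n" if "j < q + 2" for j using len block_end_le[OF that, of m] by linarith
  have "?block j1 = ?block j2"
    using fits[of j1] fits[of j2] \<open>j1 < j2\<close> \<open>j2 < q + 2\<close> same
    by (intro nth_equalityI) (auto simp: add.assoc)
  then show False using inj \<open>j1 < j2\<close> \<open>j2 < q + 2\<close> by (auto dest: inj_onD)
qed

lemma defect_letter_period_multiple:
  assumes "q dvd m" "0 < m" "defect_letter q M x = defect_letter q M (x + m)"
  shows "x \<noteq> M \<and> x + m \<noteq> M"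
proof -
  have "q dvd x + m \<longleftrightarrow> q dvd x" using \<open>q dvd m\<close> by (rule dvd_add_left_iff)
  then show ?thesis using assms(2,3) unfolding defect_letter_def by auto
qed

lemma defect_letter_period_not_multiple:
  assumes "\<not> q dvd m" "x \<noteq> M" "x + m \<noteq> M" "defect_letter q M x = defect_letter q M (x + m)"
  shows "\<not> q dvd x \<and> \<not> q dvd x + m"
proof -
  have "q dvd x \<Longrightarrow> \<not> q dvd x + m" using \<open>\<not> q dvd m\<close> dvd_add_right_iff by blast
  then show ?thesis using assms(2-4) unfolding defect_letter_def by auto
qed

lemma exists_dvd_in_window:
  fixes p q a :: nat
  assumes "0 < q"
  shows "\<exists>x. p \<le> x \<and> x < p + q \<and> q dvd x + a"
proof (intro exI conjI)
  let ?n = "p + a + (q - 1)"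
  have "?n mod q < q" using assms by simp
  then have "?n mod q \<le> q - 1" by linarith
  then show "p \<le> p + (q - 1) - ?n mod q" "p + (q - 1) - ?n mod q < p + q" using assms by linarith+
  have "p + (q - 1) - ?n mod q + a = ?n - ?n mod q" using \<open>?n mod q \<le> q - 1\<close> by linarith
  then show "q dvd p + (q - 1) - ?n mod q + a" by (simp add: minus_mod_eq_mult_div)
qed

lemma defect_letters_no_period_not_multiple:
  assumes "\<not> q dvd m" "q dvd M + 1" "q \<le> L" "3 \<le> L"
    and periodic: "\<And>x. p \<le> x \<Longrightarrow> x < p + L \<Longrightarrow> defect_letter q M x = defect_letter q M (x + m)"
  shows False
proof -
  have "q \<noteq> 0" using assms(2) by (cases q) auto
  have "q \<noteq> 1" using assms(1) by auto
  have "\<not> q dvd M"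
  proof
    assume "q dvd M"
    then have "q dvd 1" using \<open>q dvd M + 1\<close> dvd_add_right_iff by blast
    then show False using \<open>q \<noteq> 1\<close> by simp
  qed
  have in_defect_pair: "x + m = M \<or> x = M" if "p \<le> x" "x < p + L" "q dvd x \<or> q dvd x + m" for x
    using defect_letter_period_not_multiple[OF \<open>\<not> q dvd m\<close> _ _ periodic[OF that(1,2)]] that(3)
    by blast
  obtain x0 where "p \<le> x0" "x0 < p + q" "q dvd x0"
    using exists_dvd_in_window[where p = p and a = 0] \<open>q \<noteq> 0\<close> by auto
  then have "x0 + m = M" using in_defect_pair[of x0] \<open>q \<le> L\<close> \<open>\<not> q dvd M\<close> by auto
  obtain x1 where "p \<le> x1" "x1 < p + q" "q dvd x1 + m"
    using exists_dvd_in_window[where p = p and a = m] \<open>q \<noteq> 0\<close> by auto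
  then have "x1 = M" using in_defect_pair[of x1] \<open>q \<le> L\<close> \<open>\<not> q dvd M\<close> by auto
  have "x0 + 2*m = x1 + m" using \<open>x0 + m = M\<close> \<open>x1 = M\<close> by simp
  then have "q dvd x0 + 2*m" using \<open>q dvd x1 + m\<close> by metis
  then have "q dvd 2*m" using \<open>q dvd x0\<close> dvd_add_right_iff by blast
  have "q dvd x0 + (m + 1)" using \<open>q dvd M + 1\<close> \<open>x0 + m = M\<close> by (simp add: add.assoc)
  then have "q dvd m + 1" using \<open>q dvd x0\<close> dvd_add_right_iff by blast
  then have "q dvd 2*m + 2" using dvd_mult[of q "m + 1" 2] by (simp add: algebra_simps)
  then have "q dvd 2" using \<open>q dvd 2*m\<close> dvd_add_right_iff by blast
  then have "q = 2" using \<open>q \<noteq> 0\<close> \<open>q \<noteq> 1\<close> dvd_imp_le[of q 2] by linarith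
  then have pair: "x + m = M \<or> x = M" if "p \<le> x" "x < p + L" for x
    using in_defect_pair[OF that] \<open>\<not> q dvd m\<close> by auto
  have "p + m = M \<or> p = M" "p + 1 + m = M \<or> p + 1 = M" "p + 2 + m = M \<or> p + 2 = M"
    using pair[of p] pair[of "p + 1"] pair[of "p + 2"] \<open>3 \<le> L\<close> by simp_all
  then show False by linarith
qed

lemma defect_letters_no_period_multiple:
  assumes "q dvd m" "0 < m" "2 \<le> k" "p + k*m \<le> 2*q*k - 1"
    and periodic: "\<And>x. p \<le> x \<Longrightarrow> x + m < p + k*m \<Longrightarrow>
      defect_letter q (q*k - 1) x = defect_letter q (q*k - 1) (x + m)"
  shows False
proof -
  define M where "M = q*k - 1"
  have "0 < q" using assms(1,2) by (cases q) auto
  have "q*k \<le> k*m" using dvd_imp_le[OF \<open>q dvd m\<close> \<open>0 < m\<close>] by simp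
  moreover have "2*m \<le> k*m" using \<open>2 \<le> k\<close> by simp
  moreover have "M + 1 = q*k" "p + k*m \<le> M + q*k"
    using \<open>0 < q\<close> assms(3,4) by (auto simp: M_def)
  ultimately have "p \<le> M" "M < p + k*m" by linarith+
  with \<open>2*m \<le> k*m\<close> consider "M + m < p + k*m" | "p \<le> M - m" "M - m + m = M" by linarith
  then show False
  proof cases
    case 1
    then show False
      using defect_letter_period_multiple[OF \<open>q dvd m\<close> \<open>0 < m\<close> periodic] \<open>p \<le> M\<close>
      by (auto simp: M_def)
  next
    case 2
    then show False
      using defect_letter_period_multiple[OF \<open>q dvd m\<close> \<open>0 < m\<close> periodic[of "M - m"]] \<open>M < p + k*m\<close>
      by (auto simp: M_def)
  qed
qed

lemma defect_word_no_power:
  assumes "0 < q" "q + 1 \<le> k" "4 \<le> k"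
  shows "\<not> (\<exists>v. is_factor v (defect_word q k) \<and> is_power k v)"
proof
  assume "\<exists>v. is_factor v (defect_word q k) \<and> is_power k v"
  then obtain p m where "0 < m" and len: "p + k*m \<le> 2*q*k - 1"
    and run: "\<forall>z. p \<le> z \<longrightarrow> z + m < p + k*m \<longrightarrow> defect_word q k ! z = defect_word q k ! (z + m)"
    using factor_power_iff_periodic_run[of k "defect_word q k"] \<open>4 \<le> k\<close>
    by (auto simp: defect_word_def)
  have periodic: "defect_letter q (q*k - 1) z = defect_letter q (q*k - 1) (z + m)"
    if "p \<le> z" "z + m < p + k*m" for z
    using run that len by (auto simp: defect_word_def)
  show False
  proof (cases "q dvd m")
    case True
    have "2 \<le> k" using \<open>4 \<le> k\<close> by simp
    from defect_letters_no_period_multiple[OF True \<open>0 < m\<close> this len periodic]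
    show False .
  next
    case False
    have "k - 1 \<le> (k - 1)*m" using \<open>0 < m\<close> by simp
    have "k*m = (k - 1)*m + m" using \<open>4 \<le> k\<close> by (cases k) auto
    have "q dvd (q*k - 1) + 1" using \<open>0 < q\<close> \<open>4 \<le> k\<close> by simp
    moreover have "q \<le> (k - 1)*m" "3 \<le> (k - 1)*m"
      using \<open>k - 1 \<le> (k - 1)*m\<close> \<open>q + 1 \<le> k\<close> \<open>4 \<le> k\<close> by linarith+
    moreover have "defect_letter q (q*k - 1) z = defect_letter q (q*k - 1) (z + m)"
      if "p \<le> z" "z < p + (k - 1)*m" for z
      using periodic that \<open>k*m = (k - 1)*m + m\<close> by simp
    ultimately show False by (rule defect_letters_no_period_not_multiple[OF False])
  qed
qed

theorem corollary2:
  fixes k r :: nat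
  assumes "r \<ge> 3" and "k \<ge> max (r - 1) 4"
  shows "N k r \<ge> (2 * r - 4) * k"
proof -
  define q where "q = r - 2"
  have "0 < q" "r = q + 2" "q + 1 \<le> k" "4 \<le> k" using assms by (auto simp: q_def)
  then have "avoids k r (defect_word q k)"
    using defect_word_no_power defect_letters_no_antipower
    unfolding avoids_def defect_word_def by blast
  then have "length (defect_word q k) < N k r"
    using \<open>4 \<le> k\<close> by (intro length_less_N_if_avoids) simp_all
  moreover have "length (defect_word q k) = (2 * r - 4) * k - 1"
    using \<open>r = q + 2\<close> by (simp add: defect_word_def)
  ultimately show ?thesis by simp
qed

end
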